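(* Let $G$ be a finite, simple, connected graph of order $n$ and maximum degree $\Delta$. (1) If $n-2\le\Delta\le n-1$, then $\gamma_P(G)=1$. (2) If $n-4\le\Delta\le n-3$, then $1\le\gamma_P(G)\le 2$.
   Context: For $U\subseteq V(G)$, $cl(U)$ is obtained by coloring $U$ black and repeatedly applying: if a black vertex has exactly one white neighbor, that neighbor becomes black. $S$ is a power dominating set if $cl(N[S])=V(G)$; $\gamma_P(G)$ is the minimum size of a power dominating set. *)

theory Defs
  imports Main
begin

definition simple_graph :: "'a set \<Rightarrow> ('a \<Rightarrow> 'a \<Rightarrow> bool) \<Rightarrow> bool" where
  "simple_graph V E \<longleftrightarrow> finite V \<and> (\<forall>u v. E u v \<longrightarrow> u \<in> V \<and> v \<in> V)
     \<and> (\<forall>u v. E u v \<longrightarrow> E v u) \<and> (\<forall>v. \<not> E v v)"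

definition connected_graph :: "'a set \<Rightarrow> ('a \<Rightarrow> 'a \<Rightarrow> bool) \<Rightarrow> bool" where
  "connected_graph V E \<longleftrightarrow> V \<noteq> {} \<and> (\<forall>u\<in>V. \<forall>v\<in>V. (\<lambda>x y. E x y)\<^sup>*\<^sup>* u v)"

definition nbhd :: "'a set \<Rightarrow> ('a \<Rightarrow> 'a \<Rightarrow> bool) \<Rightarrow> 'a \<Rightarrow> 'a set" where
  "nbhd V E v = {u \<in> V. E v u}"

definition degree :: "'a set \<Rightarrow> ('a \<Rightarrow> 'a \<Rightarrow> bool) \<Rightarrow> 'a \<Rightarrow> nat" where
  "degree V E v = card (nbhd V E v)"

definition max_degree :: "'a set \<Rightarrow> ('a \<Rightarrow> 'a \<Rightarrow> bool) \<Rightarrow> nat" where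
  "max_degree V E = Max (degree V E ` V)"

definition closed_nbhd_set :: "'a set \<Rightarrow> ('a \<Rightarrow> 'a \<Rightarrow> bool) \<Rightarrow> 'a set \<Rightarrow> 'a set" where
  "closed_nbhd_set V E S = S \<union> (\<Union>v\<in>S. nbhd V E v)"

(* cl(U): colour U black, repeatedly: a black vertex with exactly one white
   neighbour forces that neighbour black. *)
inductive_set zf_closure :: "'a set \<Rightarrow> ('a \<Rightarrow> 'a \<Rightarrow> bool) \<Rightarrow> 'a set \<Rightarrow> 'a set"
  for V E U where
  base: "u \<in> U \<Longrightarrow> u \<in> zf_closure V E U"
| force: "\<lbrakk> v \<in> zf_closure V E U; w \<in> nbhd V E v;
            \<forall>x\<in>nbhd V E v. x \<noteq> w \<longrightarrow> x \<in> zf_closure V E U \<rbrakk> \<Longrightarrow> w \<in> zf_closure V E U"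

definition power_dominating_set :: "'a set \<Rightarrow> ('a \<Rightarrow> 'a \<Rightarrow> bool) \<Rightarrow> 'a set \<Rightarrow> bool" where
  "power_dominating_set V E S \<longleftrightarrow> S \<subseteq> V \<and> zf_closure V E (closed_nbhd_set V E S) = V"

definition power_domination_number :: "'a set \<Rightarrow> ('a \<Rightarrow> 'a \<Rightarrow> bool) \<Rightarrow> nat" where
  "power_domination_number V E = (LEAST k. \<exists>S. power_dominating_set V E S \<and> card S = k)"

end

theory Submission
  imports Defs
begin

(* Let v have maximum degree, so exactly n - 1 - \<Delta> vertices lie outside N[v].  In a connected
   graph, once all vertices but one are observed, the last one is forced by any of its neighbours;
   hence {v} is power dominating when n - 1 - \<Delta> \<le> 1.  If a, b, c lie outside N[v] (fewer are
   easier), {v, x} leaves at most one vertex unobserved when x is an endpoint of an edge among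
   a, b, c or a common neighbour of b and c.  Otherwise a, b, c are independent and a neighbour u
   of b, which exists by connectivity, misses c; then {v, a} observes u, u forces b, and c is
   forced last. *)

lemma zf_closure_subset:
  assumes "U \<subseteq> V"
  shows "zf_closure V E U \<subseteq> V"
proof
  fix x assume "x \<in> zf_closure V E U"
  then show "x \<in> V"
  proof (induction rule: zf_closure.induct)
    case (base u)
    then show ?case using assms by blast
  next
    case (force v w)
    from \<open>w \<in> nbhd V E v\<close> show ?case by (simp add: nbhd_def)
  qed
qed

lemma subset_zf_closure: "U \<subseteq> zf_closure V E U"
  by (auto intro: zf_closure.base)

lemma zf_closure_empty: "zf_closure V E {} = {}"
proof -
  have False if "x \<in> zf_closure V E {}" for x
    using that by (induction rule: zf_closure.induct) auto
  then show ?thesis by blast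
qed

lemma closed_nbhd_set_subset: "S \<subseteq> V \<Longrightarrow> closed_nbhd_set V E S \<subseteq> V"
  by (auto simp: closed_nbhd_set_def nbhd_def)

lemma closed_nbhd_set_singleton: "closed_nbhd_set V E {v} = insert v (nbhd V E v)"
  by (simp add: closed_nbhd_set_def)

lemma card_closed_nbhd_set_singleton:
  assumes "simple_graph V E"
  shows "card (closed_nbhd_set V E {v}) = Suc (degree V E v)"
proof -
  have "finite (nbhd V E v)" and "v \<notin> nbhd V E v"
    using assms by (auto simp: simple_graph_def nbhd_def)
  then show ?thesis by (simp add: closed_nbhd_set_singleton degree_def)
qed

lemma card_outside_closed_nbhd:
  assumes "simple_graph V E" and "v \<in> V"
  shows "card (V - closed_nbhd_set V E {v}) + Suc (degree V E v) = card V"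
proof -
  have "closed_nbhd_set V E {v} \<subseteq> V" using assms(2) by (simp add: closed_nbhd_set_subset)
  moreover have "finite V" using assms(1) by (simp add: simple_graph_def)
  ultimately show ?thesis
    using card_closed_nbhd_set_singleton[OF assms(1)] card_Diff_subset card_mono
    by (metis finite_subset le_add_diff_inverse2)
qed

lemma max_degree_attained:
  assumes "finite V" and "V \<noteq> {}"
  obtains v where "v \<in> V" and "degree V E v = max_degree V E"
proof -
  have "max_degree V E \<in> degree V E ` V"
    unfolding max_degree_def using assms by (intro Max_in) auto
  then show thesis using that by auto
qed

lemma exists_adjacent:
  assumes "simple_graph V E" and "connected_graph V E"
    and "r \<in> V" and "x \<in> V" and "x \<noteq> r"
  obtains y where "y \<in> V" and "E y r"
proof -
  have "E\<^sup>*\<^sup>* x r" using assms(2-4) unfolding connected_graph_def by blast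
  with \<open>x \<noteq> r\<close> obtain y where "E y r" by (metis rtranclp.cases)
  moreover from this have "y \<in> V" using assms(1) by (simp add: simple_graph_def)
  ultimately show thesis by (rule that[rotated])
qed

lemma zf_closure_eq_if_one_missing:
  assumes "simple_graph V E" and "connected_graph V E" and "U \<subseteq> V" and "U \<noteq> {}"
    and missing: "V - {r} \<subseteq> zf_closure V E U"
  shows "zf_closure V E U = V"
proof -
  have "r \<in> zf_closure V E U" if "r \<in> V"
  proof (rule ccontr)
    assume "r \<notin> zf_closure V E U"
    obtain x where "x \<in> U" using \<open>U \<noteq> {}\<close> by blast
    have "x \<in> V" using \<open>x \<in> U\<close> \<open>U \<subseteq> V\<close> by blast
    moreover have "x \<noteq> r"
      using zf_closure.base[OF \<open>x \<in> U\<close>] \<open>r \<notin> zf_closure V E U\<close> by blast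
    ultimately obtain y where y: "y \<in> V" "E y r"
      using exists_adjacent[OF assms(1,2) \<open>r \<in> V\<close>] by blast
    have "y \<noteq> r" using assms(1) \<open>E y r\<close> unfolding simple_graph_def by blast
    with y missing have "y \<in> zf_closure V E U" by blast
    moreover have "r \<in> nbhd V E y" using y \<open>r \<in> V\<close> by (simp add: nbhd_def)
    moreover have "\<forall>z\<in>nbhd V E y. z \<noteq> r \<longrightarrow> z \<in> zf_closure V E U"
      using missing unfolding nbhd_def by blast
    ultimately have "r \<in> zf_closure V E U" by (rule zf_closure.force)
    with \<open>r \<notin> zf_closure V E U\<close> show False ..
  qed
  with missing have "V \<subseteq> zf_closure V E U" by blast
  with zf_closure_subset[OF assms(3)] show ?thesis by (rule antisym)
qed

lemma closed_nbhd_set_nonempty: "S \<noteq> {} \<Longrightarrow> closed_nbhd_set V E S \<noteq> {}"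
  by (auto simp: closed_nbhd_set_def)

lemma power_dominating_set_if_one_unobserved:
  assumes "simple_graph V E" and "connected_graph V E"
    and "S \<subseteq> V" and "S \<noteq> {}" and "V - closed_nbhd_set V E S \<subseteq> {r}"
  shows "power_dominating_set V E S"
proof -
  have "V - {r} \<subseteq> zf_closure V E (closed_nbhd_set V E S)"
    using assms(5) subset_zf_closure[of "closed_nbhd_set V E S" V E] by blast
  then show ?thesis
    using zf_closure_eq_if_one_missing[OF assms(1,2) closed_nbhd_set_subset closed_nbhd_set_nonempty]
      assms(3,4)
    by (simp add: power_dominating_set_def)
qed

lemma power_dominating_set_if_two_unobserved:
  assumes "simple_graph V E" and "connected_graph V E"
    and "S \<subseteq> V" and "S \<noteq> {}" and unobserved: "V - closed_nbhd_set V E S \<subseteq> {b, c}"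
    and "u \<in> V" and "u \<noteq> b" and "u \<noteq> c" and "E u b" and "\<not> E u c"
  shows "power_dominating_set V E S"
proof -
  let ?C = "zf_closure V E (closed_nbhd_set V E S)"
  have observed: "V - {b, c} \<subseteq> ?C" using unobserved subset_zf_closure[of "closed_nbhd_set V E S" V E] by blast
  have "b \<in> ?C"
  proof (rule zf_closure.force)
    show "u \<in> ?C" using observed assms(6-8) by blast
    show "b \<in> nbhd V E u" using assms(1,9) by (simp add: nbhd_def simple_graph_def)
    show "\<forall>x\<in>nbhd V E u. x \<noteq> b \<longrightarrow> x \<in> ?C" using observed \<open>\<not> E u c\<close> by (auto simp: nbhd_def)
  qed
  with observed have "V - {c} \<subseteq> ?C" by blast
  then show ?thesis
    using zf_closure_eq_if_one_missing[OF assms(1,2) closed_nbhd_set_subset closed_nbhd_set_nonempty]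
      assms(3,4)
    by (simp add: power_dominating_set_def)
qed

lemma power_dominating_singleton:
  assumes "simple_graph V E" and "connected_graph V E" and "v \<in> V"
    and "card (V - closed_nbhd_set V E {v}) \<le> 1"
  shows "power_dominating_set V E {v}"
proof -
  have "finite V" using assms(1) by (simp add: simple_graph_def)
  then obtain r where "V - closed_nbhd_set V E {v} \<subseteq> {r}"
    using assms(4) by (metis card_le_Suc0_iff_eq One_nat_def finite_Diff singletonI subsetI)
  then show ?thesis using power_dominating_set_if_one_unobserved[OF assms(1,2)] \<open>v \<in> V\<close> by blast
qed

lemma power_dominating_pair_if_three_outside:
  assumes sg: "simple_graph V E" and cg: "connected_graph V E" and "v \<in> V"
    and outside_v: "V - closed_nbhd_set V E {v} = {a, b, c}"
  shows "\<exists>x\<in>V. power_dominating_set V E {v, x}"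
proof -
  have cover: "\<exists>x\<in>V. power_dominating_set V E {v, x}"
    if "x \<in> V" and "V - closed_nbhd_set V E {v, x} \<subseteq> {r}" for x r
    using power_dominating_set_if_one_unobserved[OF sg cg, of "{v, x}" r] that \<open>v \<in> V\<close> by blast
  have outside: "V - closed_nbhd_set V E {v, x} = {a, b, c} - insert x (nbhd V E x)" for x
    using outside_v by (auto simp: closed_nbhd_set_def)
  have abc: "a \<in> V" "b \<in> V" "c \<in> V" and "v \<notin> {a, b, c}"
    using outside_v by (auto simp: closed_nbhd_set_def)
  have sym: "\<And>x y. E x y \<Longrightarrow> E y x" and irrefl: "\<And>x. \<not> E x x"
    using sg by (auto simp: simple_graph_def)
  show ?thesis
  proof (cases "E a b \<or> E a c \<or> E b c")
    case True
    then show ?thesis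
      using cover[of a c] cover[of a b] cover[of b a] abc unfolding outside by (auto simp: nbhd_def)
  next
    case independent: False
    obtain u where u: "u \<in> V" "E u b"
      using exists_adjacent[OF sg cg \<open>b \<in> V\<close> \<open>v \<in> V\<close>] \<open>v \<notin> {a, b, c}\<close> by blast
    have "u \<notin> {a, b, c}" using u independent sym irrefl by blast
    show ?thesis
    proof (cases "E u c")
      case True
      then show ?thesis using cover[of u a] u abc unfolding outside by (auto simp: nbhd_def)
    next
      case False
      have "V - closed_nbhd_set V E {v, a} \<subseteq> {b, c}"
        unfolding outside by auto
      then have "power_dominating_set V E {v, a}"
        using power_dominating_set_if_two_unobserved[OF sg cg, of "{v, a}" b c u]
          \<open>v \<in> V\<close> abc u \<open>u \<notin> {a, b, c}\<close> False by auto
      then show ?thesis using abc by blast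
    qed
  qed
qed

lemma power_dominating_pair:
  assumes sg: "simple_graph V E" and cg: "connected_graph V E" and "v \<in> V"
    and "card (V - closed_nbhd_set V E {v}) \<le> 3"
  shows "\<exists>x\<in>V. power_dominating_set V E {v, x}"
proof -
  let ?W = "V - closed_nbhd_set V E {v}"
  consider "card ?W \<le> 1" | "card ?W = 2" | "card ?W = 3"
    using assms(4) by linarith
  then show ?thesis
  proof cases
    case 1
    then show ?thesis using power_dominating_singleton[OF sg cg \<open>v \<in> V\<close>] \<open>v \<in> V\<close> by force
  next
    case 2
    then obtain a b where W: "?W = {a, b}" by (meson card_2_iff)
    then have "a \<in> V" and "V - closed_nbhd_set V E {v, a} \<subseteq> {b}"
      by (auto simp: closed_nbhd_set_def)
    then show ?thesis
      using power_dominating_set_if_one_unobserved[OF sg cg, of "{v, a}" b] \<open>v \<in> V\<close> by blast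
  next
    case 3
    then obtain a b c where "?W = {a, b, c}" by (meson card_3_iff)
    then show ?thesis by (rule power_dominating_pair_if_three_outside[OF sg cg \<open>v \<in> V\<close>])
  qed
qed

lemma power_dominating_set_vertex_set: "power_dominating_set V E V"
proof -
  have "closed_nbhd_set V E V = V" by (auto simp: closed_nbhd_set_def nbhd_def)
  then show ?thesis
    using zf_closure_subset[of V V E] subset_zf_closure[of V V E]
    by (simp add: power_dominating_set_def)
qed

lemma power_domination_number_le:
  assumes "power_dominating_set V E S" and "card S \<le> k"
  shows "power_domination_number V E \<le> k"
  unfolding power_domination_number_def using assms
  by (metis (mono_tags, lifting) Least_le le_trans)

lemma one_le_power_domination_number:
  assumes "finite V" and "V \<noteq> {}"
  shows "1 \<le> power_domination_number V E"
proof -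
  obtain S where S: "power_dominating_set V E S" "card S = power_domination_number V E"
    using LeastI[of "\<lambda>k. \<exists>S. power_dominating_set V E S \<and> card S = k" "card V"]
      power_dominating_set_vertex_set[of V E]
    unfolding power_domination_number_def by blast
  have "S \<noteq> {}"
    using S(1) assms(2) by (auto simp: power_dominating_set_def closed_nbhd_set_def zf_closure_empty)
  moreover have "finite S" using S(1) assms(1) finite_subset by (auto simp: power_dominating_set_def)
  ultimately have "0 < card S" by (simp add: card_gt_0_iff)
  with S(2) show ?thesis by simp
qed

theorem mainTheorem5:
  fixes V :: "'a set" and E :: "'a \<Rightarrow> 'a \<Rightarrow> bool"
  assumes "simple_graph V E" and "connected_graph V E"
  shows "(int (card V) - 2 \<le> int (max_degree V E) \<and> int (max_degree V E) \<le> int (card V) - 1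
            \<longrightarrow> power_domination_number V E = 1)
       \<and> (int (card V) - 4 \<le> int (max_degree V E) \<and> int (max_degree V E) \<le> int (card V) - 3
            \<longrightarrow> 1 \<le> power_domination_number V E \<and> power_domination_number V E \<le> 2)"
proof -
  have "finite V" and "V \<noteq> {}"
    using assms unfolding simple_graph_def connected_graph_def by auto
  then obtain v where "v \<in> V" and v_max: "degree V E v = max_degree V E"
    by (rule max_degree_attained)
  have outside: "int (card (V - closed_nbhd_set V E {v})) = int (card V) - 1 - int (max_degree V E)"
    using card_outside_closed_nbhd[OF assms(1) \<open>v \<in> V\<close>] v_max by linarith
  have pos: "1 \<le> power_domination_number V E"
    using \<open>finite V\<close> \<open>V \<noteq> {}\<close> by (rule one_le_power_domination_number)
  show ?thesis
  proof (intro conjI impI)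
    assume "int (card V) - 2 \<le> int (max_degree V E) \<and> int (max_degree V E) \<le> int (card V) - 1"
    then have "power_dominating_set V E {v}"
      using power_dominating_singleton[OF assms \<open>v \<in> V\<close>] outside by simp
    then show "power_domination_number V E = 1"
      using power_domination_number_le[of V E "{v}" 1] pos by simp
  next
    show "1 \<le> power_domination_number V E" by (fact pos)
  next
    assume "int (card V) - 4 \<le> int (max_degree V E) \<and> int (max_degree V E) \<le> int (card V) - 3"
    then obtain x where "power_dominating_set V E {v, x}"
      using power_dominating_pair[OF assms \<open>v \<in> V\<close>] outside by auto
    then show "power_domination_number V E \<le> 2"
      by (rule power_domination_number_le) (simp add: card_insert_if)
  qed
qed

end
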